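(* For integers $n\ge 1$ and $k\ge 1$, let $a_{n,k}$ be the number of permutations $\pi=\pi_1\cdots\pi_n\in\mathcal{S}_n$ such that (i) there is no $i$ with $\pi_i\pi_{i+1}\pi_{i+2}$ order isomorphic to $231$, (ii) there is no $i$ with $\pi_i\pi_{i+1}\pi_{i+2}$ order isomorphic to $132$, and (iii) there is no $i$ with $\pi_{i+k}=\pi_i+1$ (i.e. $\pi$ avoids the place-difference-value pattern $(12,(\mathbb{P},\{k\},\mathbb{P}),\{(1,2,\{1\})\},(\mathbb{P},\mathbb{P}))$). Then $$a_{n,k}=\begin{cases}F(n) & \text{if } k=1,\\ 2^{n-1} & \text{if } k\ge 2 \text{ and } n\le k,\\ 3\cdot 2^{n-3} & \text{if } k\ge 2\text{ and } n\ge k+1,\end{cases}$$ where $F(n)$ is the $n$-th Fibonacci number, $F(1)=F(2)=1$, $F(n)=F(n-1)+F(n-2)$.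
   Context: $\mathcal{S}_n$ is the set of permutations of $\{1,\dots,n\}$ written as words; $\mathbb{P}$ is the set of positive integers. Conditions (i) and (ii) say $\pi$ avoids the consecutive (generalized) patterns $231$ and $132$. *)

theory Defs
  imports "HOL-Combinatorics.Multiset_Permutations" "HOL-Number_Theory.Fib"
begin

text \<open>Permutations of {1..n} are lists (words); indices are 0-based here.\<close>

definition has_consec_231 :: "nat list \<Rightarrow> bool" where
  "has_consec_231 xs \<longleftrightarrow> (\<exists>i. i + 2 < length xs \<and>
      xs ! (i+2) < xs ! i \<and> xs ! i < xs ! (i+1))"

definition has_consec_132 :: "nat list \<Rightarrow> bool" where
  "has_consec_132 xs \<longleftrightarrow> (\<exists>i. i + 2 < length xs \<and>
      xs ! i < xs ! (i+2) \<and> xs ! (i+2) < xs ! (i+1))"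

definition has_pdv_k :: "nat \<Rightarrow> nat list \<Rightarrow> bool" where
  "has_pdv_k k xs \<longleftrightarrow> (\<exists>i. i + k < length xs \<and> xs ! (i+k) = xs ! i + 1)"

definition a_nk :: "nat \<Rightarrow> nat \<Rightarrow> nat" where
  "a_nk n k = card {xs \<in> permutations_of_set {1..n}.
      \<not> has_consec_231 xs \<and> \<not> has_consec_132 xs \<and> \<not> has_pdv_k k xs}"

end

theory Submission imports Defs begin

text \<open>
  The largest entry of a permutation avoiding the consecutive patterns 231 and 132 lies at one
  of its ends, since together with its two neighbours it would otherwise form one of the patterns.
  Hence the admissible permutations of {1..m+1} arise from those, \<sigma>, of {1..m} by putting m+1
  in front or at the back. In front it never creates \<pi>(i+k) = \<pi>(i) + 1; at the back it does so
  exactly when \<sigma>(m+1-k) = m, and as m also lies at an end of \<sigma>, this needs k = 1 or k = m.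
  Counting these exceptions yields a(m+2) = a(m+1) + a(m) for k = 1 and, for k \<ge> 2, doubling
  a(m+1) = 2 a(m) except at m = k, where a(k+1) = 2 a(k) - a(k-1).
\<close>

lemma ex_consec_triple_Cons:
  "(\<exists>i. i + 2 < length (x # ys) \<and> P ((x # ys) ! i) ((x # ys) ! (i + 1)) ((x # ys) ! (i + 2)))
   \<longleftrightarrow> (1 < length ys \<and> P x (ys ! 0) (ys ! 1))
       \<or> (\<exists>i. i + 2 < length ys \<and> P (ys ! i) (ys ! (i + 1)) (ys ! (i + 2)))"
  (is "(\<exists>i. ?Q i) \<longleftrightarrow> ?head \<or> ?tail")
proof
  assume "\<exists>i. ?Q i"
  then obtain i where "?Q i" ..
  then show "?head \<or> ?tail"
    by (cases i) (auto simp: numeral_2_eq_2)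
next
  assume "?head \<or> ?tail"
  then show "\<exists>i. ?Q i"
  proof
    assume ?head
    then have "?Q 0" by (simp add: numeral_2_eq_2)
    then show ?thesis ..
  next
    assume ?tail
    then obtain i where "i + 2 < length ys \<and> P (ys ! i) (ys ! (i + 1)) (ys ! (i + 2))" ..
    then have "?Q (Suc i)" by (simp add: numeral_2_eq_2)
    then show ?thesis ..
  qed
qed

lemma ex_consec_triple_snoc:
  "(\<exists>i. i + 2 < length (ys @ [x]) \<and> P ((ys @ [x]) ! i) ((ys @ [x]) ! (i + 1)) ((ys @ [x]) ! (i + 2)))
   \<longleftrightarrow> (1 < length ys \<and> P (ys ! (length ys - 2)) (ys ! (length ys - 1)) x)
       \<or> (\<exists>i. i + 2 < length ys \<and> P (ys ! i) (ys ! (i + 1)) (ys ! (i + 2)))"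
  (is "(\<exists>i. ?Q i) \<longleftrightarrow> ?last \<or> ?init")
proof
  assume "\<exists>i. ?Q i"
  then obtain i where i: "?Q i" ..
  show "?last \<or> ?init"
  proof (cases "i + 2 < length ys")
    case True
    then show ?thesis using i by (auto simp: nth_append)
  next
    case False
    then have "length ys = i + 2" using i by auto
    then show ?thesis using i by (auto simp: nth_append)
  qed
next
  assume "?last \<or> ?init"
  then show "\<exists>i. ?Q i"
  proof
    assume last: ?last
    define j where "j = length ys - 2"
    have "length ys = j + 2"
      using last unfolding j_def by linarith
    then have "?Q j"
      using last by (simp add: nth_append)
    then show ?thesis ..
  next
    assume ?init
    then obtain i where "i + 2 < length ys \<and> P (ys ! i) (ys ! (i + 1)) (ys ! (i + 2))" ..
    then have "?Q i" by (simp add: nth_append)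
    then show ?thesis ..
  qed
qed

lemma has_consec_231_Cons_max:
  assumes "\<forall>y\<in>set ys. y < x"
  shows "has_consec_231 (x # ys) \<longleftrightarrow> has_consec_231 ys"
proof -
  have "has_consec_231 (x # ys) \<longleftrightarrow> (1 < length ys \<and> ys ! 1 < x \<and> x < ys ! 0) \<or> has_consec_231 ys"
    unfolding has_consec_231_def by (rule ex_consec_triple_Cons[where P = "\<lambda>a b c. c < a \<and> a < b"])
  moreover have "ys ! 0 < x" if "1 < length ys"
  proof -
    have "ys ! 0 \<in> set ys"
      using that by (intro nth_mem) linarith
    then show ?thesis
      using assms by blast
  qed
  ultimately show ?thesis by auto
qed

lemma has_consec_132_Cons_max:
  assumes "\<forall>y\<in>set ys. y < x"
  shows "has_consec_132 (x # ys) \<longleftrightarrow> has_consec_132 ys"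
proof -
  have "has_consec_132 (x # ys) \<longleftrightarrow> (1 < length ys \<and> x < ys ! 1 \<and> ys ! 1 < ys ! 0) \<or> has_consec_132 ys"
    unfolding has_consec_132_def by (rule ex_consec_triple_Cons[where P = "\<lambda>a b c. a < c \<and> c < b"])
  moreover have "1 < length ys \<Longrightarrow> ys ! 1 < x"
    using assms by simp
  ultimately show ?thesis by auto
qed

lemma has_consec_231_snoc_max:
  assumes "\<forall>y\<in>set ys. y < x"
  shows "has_consec_231 (ys @ [x]) \<longleftrightarrow> has_consec_231 ys"
proof -
  have "has_consec_231 (ys @ [x]) \<longleftrightarrow>
      (1 < length ys \<and> x < ys ! (length ys - 2) \<and> ys ! (length ys - 2) < ys ! (length ys - 1))
      \<or> has_consec_231 ys"
    unfolding has_consec_231_def by (rule ex_consec_triple_snoc[where P = "\<lambda>a b c. c < a \<and> a < b"])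
  moreover have "1 < length ys \<Longrightarrow> ys ! (length ys - 2) < x"
    using assms by simp
  ultimately show ?thesis by auto
qed

lemma has_consec_132_snoc_max:
  assumes "\<forall>y\<in>set ys. y < x"
  shows "has_consec_132 (ys @ [x]) \<longleftrightarrow> has_consec_132 ys"
proof -
  have "has_consec_132 (ys @ [x]) \<longleftrightarrow>
      (1 < length ys \<and> ys ! (length ys - 2) < x \<and> x < ys ! (length ys - 1))
      \<or> has_consec_132 ys"
    unfolding has_consec_132_def by (rule ex_consec_triple_snoc[where P = "\<lambda>a b c. a < c \<and> c < b"])
  moreover have "1 < length ys \<Longrightarrow> ys ! (length ys - 1) < x"
    using assms by simp
  ultimately show ?thesis by auto
qed

lemma has_pdv_k_Cons:
  assumes "k \<ge> 1"
  shows "has_pdv_k k (x # ys) \<longleftrightarrow> (k \<le> length ys \<and> ys ! (k - 1) = x + 1) \<or> has_pdv_k k ys"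
proof
  assume "has_pdv_k k (x # ys)"
  then obtain i where i: "i + k < length (x # ys)" "(x # ys) ! (i + k) = (x # ys) ! i + 1"
    unfolding has_pdv_k_def by blast
  show "(k \<le> length ys \<and> ys ! (k - 1) = x + 1) \<or> has_pdv_k k ys"
  proof (cases i)
    case 0
    then show ?thesis using i assms by (cases k) auto
  next
    case (Suc j)
    then show ?thesis using i unfolding has_pdv_k_def by auto
  qed
next
  assume "(k \<le> length ys \<and> ys ! (k - 1) = x + 1) \<or> has_pdv_k k ys"
  then show "has_pdv_k k (x # ys)"
    unfolding has_pdv_k_def
  proof
    assume "k \<le> length ys \<and> ys ! (k - 1) = x + 1"
    then show "\<exists>i. i + k < length (x # ys) \<and> (x # ys) ! (i + k) = (x # ys) ! i + 1"
      using assms by (intro exI[of _ 0]) (cases k, auto)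
  next
    assume "\<exists>i. i + k < length ys \<and> ys ! (i + k) = ys ! i + 1"
    then show "\<exists>i. i + k < length (x # ys) \<and> (x # ys) ! (i + k) = (x # ys) ! i + 1"
      by (metis Suc_less_eq add_Suc length_Cons nth_Cons_Suc)
  qed
qed

lemma has_pdv_k_snoc:
  assumes "k \<ge> 1"
  shows "has_pdv_k k (ys @ [x]) \<longleftrightarrow>
    has_pdv_k k ys \<or> (k \<le> length ys \<and> ys ! (length ys - k) + 1 = x)"
proof
  assume "has_pdv_k k (ys @ [x])"
  then obtain i where i: "i + k < length (ys @ [x])" "(ys @ [x]) ! (i + k) = (ys @ [x]) ! i + 1"
    unfolding has_pdv_k_def by blast
  show "has_pdv_k k ys \<or> (k \<le> length ys \<and> ys ! (length ys - k) + 1 = x)"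
  proof (cases "i + k < length ys")
    case True
    then show ?thesis using i unfolding has_pdv_k_def by (auto simp: nth_append)
  next
    case False
    with i(1) have len: "length ys = i + k"
      by simp
    have "(ys @ [x]) ! (i + k) = x"
      using len by (simp add: nth_append)
    moreover have "(ys @ [x]) ! i = ys ! (length ys - k)"
      using len assms by (simp add: nth_append)
    ultimately show ?thesis
      using i(2) len by simp
  qed
next
  assume "has_pdv_k k ys \<or> (k \<le> length ys \<and> ys ! (length ys - k) + 1 = x)"
  then show "has_pdv_k k (ys @ [x])"
    unfolding has_pdv_k_def
  proof
    assume "\<exists>i. i + k < length ys \<and> ys ! (i + k) = ys ! i + 1"
    then obtain i where "i + k < length ys" "ys ! (i + k) = ys ! i + 1"
      by blast
    then show "\<exists>i. i + k < length (ys @ [x]) \<and> (ys @ [x]) ! (i + k) = (ys @ [x]) ! i + 1"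
      by (intro exI[of _ i]) (simp add: nth_append)
  next
    assume "k \<le> length ys \<and> ys ! (length ys - k) + 1 = x"
    then show "\<exists>i. i + k < length (ys @ [x]) \<and> (ys @ [x]) ! (i + k) = (ys @ [x]) ! i + 1"
      using assms by (intro exI[of _ "length ys - k"]) (auto simp: nth_append)
  qed
qed

lemma interior_peak_imp_consec_231_or_132:
  assumes "i + 2 < length xs" "xs ! i < xs ! (i + 1)" "xs ! (i + 2) < xs ! (i + 1)"
    and "xs ! i \<noteq> xs ! (i + 2)"
  shows "has_consec_231 xs \<or> has_consec_132 xs"
proof (cases "xs ! (i + 2) < xs ! i")
  case True
  then have "has_consec_231 xs"
    unfolding has_consec_231_def using assms(1,2) by blast
  then show ?thesis ..
next
  case False
  then have "xs ! i < xs ! (i + 2)"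
    using assms(4) by simp
  then have "has_consec_132 xs"
    unfolding has_consec_132_def using assms(1,3) by blast
  then show ?thesis ..
qed

lemma max_at_ends:
  assumes "distinct xs" "p < length xs" "\<forall>x\<in>set xs. x \<le> xs ! p"
    and "\<not> has_consec_231 xs" "\<not> has_consec_132 xs"
  shows "p = 0 \<or> p = length xs - 1"
proof (rule ccontr)
  assume interior: "\<not> (p = 0 \<or> p = length xs - 1)"
  define i where "i = p - 1"
  have p: "p = i + 1" "i + 2 < length xs"
    using interior assms(2) unfolding i_def by auto
  have "xs ! i \<noteq> xs ! p" "xs ! (i + 2) \<noteq> xs ! p" "xs ! i \<noteq> xs ! (i + 2)"
    using assms(1) p by (simp_all add: nth_eq_iff_index_eq)
  moreover have "xs ! i \<le> xs ! p" "xs ! (i + 2) \<le> xs ! p"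
    using assms(3) p by auto
  ultimately show False
    using interior_peak_imp_consec_231_or_132[of i xs] p assms(4,5) by simp
qed

lemma Cons_in_permutations_of_set_iff:
  assumes "x \<notin> A"
  shows "x # xs \<in> permutations_of_set (insert x A) \<longleftrightarrow> xs \<in> permutations_of_set A"
proof
  assume "x # xs \<in> permutations_of_set (insert x A)"
  then have "insert x (set xs) = insert x A" "x \<notin> set xs" "distinct xs"
    by (auto simp: permutations_of_set_def)
  then have "set xs = A"
    using assms by (metis Diff_insert_absorb)
  then show "xs \<in> permutations_of_set A"
    using \<open>distinct xs\<close> by blast
next
  assume "xs \<in> permutations_of_set A"
  then show "x # xs \<in> permutations_of_set (insert x A)"
    using assms by (auto simp: permutations_of_set_def)
qed

lemma snoc_in_permutations_of_set_iff:
  assumes "x \<notin> A"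
  shows "xs @ [x] \<in> permutations_of_set (insert x A) \<longleftrightarrow> xs \<in> permutations_of_set A"
proof -
  have "xs @ [x] \<in> permutations_of_set B \<longleftrightarrow> x # xs \<in> permutations_of_set B" for B
    by (auto simp: permutations_of_set_def)
  then show ?thesis
    using Cons_in_permutations_of_set_iff[OF assms] by simp
qed

definition avoiders :: "nat \<Rightarrow> nat \<Rightarrow> nat list set" where
  "avoiders k n = {xs \<in> permutations_of_set {1..n}.
      \<not> has_consec_231 xs \<and> \<not> has_consec_132 xs \<and> \<not> has_pdv_k k xs}"

lemma a_nk_eq_card_avoiders: "a_nk n k = card (avoiders k n)"
  by (simp add: a_nk_def avoiders_def)

lemma finite_avoiders: "finite (avoiders k n)"
  unfolding avoiders_def by simp

lemma avoidersD:
  assumes "xs \<in> avoiders k n"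
  shows "set xs = {1..n}" "distinct xs" "length xs = n"
  using assms length_finite_permutations_of_set[of xs "{1..n}"]
  by (auto simp: avoiders_def permutations_of_set_def)

lemma avoiders_1: "avoiders k 1 = {[1]}"
  by (auto simp: avoiders_def has_consec_231_def has_consec_132_def has_pdv_k_def)

lemma nth_avoiders_eq_max:
  assumes "ys \<in> avoiders k m" "i < m" "ys ! i = m"
  shows "i = 0 \<or> i = m - 1"
  using max_at_ends[of ys i] avoidersD[OF assms(1)] assms by (auto simp: avoiders_def)

lemma Cons_in_avoiders_iff:
  assumes "k \<ge> 1"
  shows "Suc m # ys \<in> avoiders k (Suc m) \<longleftrightarrow> ys \<in> avoiders k m"
proof -
  have perm: "Suc m # ys \<in> permutations_of_set {1..Suc m} \<longleftrightarrow> ys \<in> permutations_of_set {1..m}"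
    using Cons_in_permutations_of_set_iff[of "Suc m" "{1..m}"] by (simp add: atLeastAtMostSuc_conv)
  show ?thesis
  proof (cases "ys \<in> permutations_of_set {1..m}")
    case False
    then show ?thesis
      using perm by (simp add: avoiders_def)
  next
    case True
    then have below: "\<forall>y\<in>set ys. y < Suc m"
      by (auto simp: permutations_of_set_def)
    have "ys ! (k - 1) \<in> set ys" if "k \<le> length ys"
      using that assms by (intro nth_mem) linarith
    then have "\<not> (k \<le> length ys \<and> ys ! (k - 1) = Suc m + 1)"
      using below by fastforce
    then show ?thesis
      using perm True below unfolding avoiders_def
      by (simp add: has_consec_231_Cons_max has_consec_132_Cons_max has_pdv_k_Cons[OF assms])
  qed
qed

lemma snoc_in_avoiders_iff:
  assumes "k \<ge> 1"
  shows "ys @ [Suc m] \<in> avoiders k (Suc m) \<longleftrightarrow>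
    ys \<in> avoiders k m \<and> \<not> (k \<le> m \<and> ys ! (m - k) = m)"
proof -
  have perm: "ys @ [Suc m] \<in> permutations_of_set {1..Suc m} \<longleftrightarrow> ys \<in> permutations_of_set {1..m}"
    using snoc_in_permutations_of_set_iff[of "Suc m" "{1..m}"] by (simp add: atLeastAtMostSuc_conv)
  have "ys \<in> permutations_of_set {1..m} \<Longrightarrow> (\<forall>y\<in>set ys. y < Suc m) \<and> length ys = m"
    by (auto simp: permutations_of_set_def length_finite_permutations_of_set)
  then show ?thesis
    using perm assms unfolding avoiders_def
    by (auto simp: has_consec_231_snoc_max has_consec_132_snoc_max has_pdv_k_snoc)
qed

lemma avoiders_Suc:
  assumes "k \<ge> 1"
  shows "avoiders k (Suc m) = Cons (Suc m) ` avoiders k m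
    \<union> (\<lambda>ys. ys @ [Suc m]) ` {ys \<in> avoiders k m. \<not> (k \<le> m \<and> ys ! (m - k) = m)}"
    (is "_ = ?front \<union> ?back")
proof
  show "avoiders k (Suc m) \<subseteq> ?front \<union> ?back"
  proof
    fix xs assume xs: "xs \<in> avoiders k (Suc m)"
    note xs_perm = avoidersD[OF xs]
    have "Suc m \<in> set xs"
      using xs_perm(1) by simp
    then obtain p where p: "p < Suc m" "xs ! p = Suc m"
      using xs_perm(3) by (auto simp: in_set_conv_nth)
    have "p = 0 \<or> p = m"
      using nth_avoiders_eq_max[OF xs p] by simp
    then show "xs \<in> ?front \<union> ?back"
    proof
      assume "p = 0"
      then obtain ys where ys: "xs = Suc m # ys"
        using p xs_perm(3) by (cases xs) auto
      then have "ys \<in> avoiders k m"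
        using xs Cons_in_avoiders_iff[OF assms] by simp
      then show ?thesis
        using ys by blast
    next
      assume "p = m"
      obtain ys y where ys: "xs = ys @ [y]"
        using xs_perm(3) by (cases xs rule: rev_exhaust) auto
      then have "y = Suc m"
        using p \<open>p = m\<close> xs_perm(3) by (simp add: nth_append)
      then have "ys \<in> avoiders k m \<and> \<not> (k \<le> m \<and> ys ! (m - k) = m)"
        using xs ys snoc_in_avoiders_iff[OF assms] by simp
      then show ?thesis
        using ys \<open>y = Suc m\<close> by blast
    qed
  qed
next
  show "?front \<union> ?back \<subseteq> avoiders k (Suc m)"
    using Cons_in_avoiders_iff[OF assms] snoc_in_avoiders_iff[OF assms] by auto
qed

lemma card_avoiders_Suc:
  assumes "k \<ge> 1" "m \<ge> 1"
  shows "card (avoiders k (Suc m)) =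
    card (avoiders k m) + card {ys \<in> avoiders k m. \<not> (k \<le> m \<and> ys ! (m - k) = m)}"
proof -
  let ?back = "{ys \<in> avoiders k m. \<not> (k \<le> m \<and> ys ! (m - k) = m)}"
  have "Suc m \<notin> set zs" if "zs \<in> avoiders k m" for zs
    using avoidersD(1)[OF that] by simp
  then have "Cons (Suc m) ` avoiders k m \<inter> (\<lambda>ys. ys @ [Suc m]) ` ?back = {}"
    using assms(2) by (force simp: Cons_eq_append_conv dest: avoidersD(3))
  then have "card (avoiders k (Suc m)) =
      card (Cons (Suc m) ` avoiders k m) + card ((\<lambda>ys. ys @ [Suc m]) ` ?back)"
    unfolding avoiders_Suc[OF assms(1)] by (simp add: card_Un_disjoint finite_avoiders)
  also have "\<dots> = card (avoiders k m) + card ?back"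
    by (simp add: card_image inj_on_def)
  finally show ?thesis .
qed

lemma card_avoiders_starting_with_max:
  assumes "k \<ge> 1"
  shows "card {xs \<in> avoiders k (Suc m). xs ! 0 = Suc m} = card (avoiders k m)"
proof -
  have "{xs \<in> avoiders k (Suc m). xs ! 0 = Suc m} = Cons (Suc m) ` avoiders k m"
  proof
    show "{xs \<in> avoiders k (Suc m). xs ! 0 = Suc m} \<subseteq> Cons (Suc m) ` avoiders k m"
    proof
      fix xs assume xs: "xs \<in> {xs \<in> avoiders k (Suc m). xs ! 0 = Suc m}"
      then obtain ys where ys: "xs = Suc m # ys"
        using avoidersD(3)[of xs k "Suc m"] by (cases xs) auto
      then have "ys \<in> avoiders k m"
        using xs Cons_in_avoiders_iff[OF assms] by simp
      then show "xs \<in> Cons (Suc m) ` avoiders k m"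
        using ys by blast
    qed
    show "Cons (Suc m) ` avoiders k m \<subseteq> {xs \<in> avoiders k (Suc m). xs ! 0 = Suc m}"
      using Cons_in_avoiders_iff[OF assms] by auto
  qed
  then show ?thesis
    by (simp add: card_image)
qed

lemma starts_with_max_iff_not_ends_with_max:
  assumes "ys \<in> avoiders k (Suc m)" "m \<ge> 1"
  shows "ys ! 0 = Suc m \<longleftrightarrow> ys ! m \<noteq> Suc m"
proof -
  have "Suc m \<in> set ys"
    using avoidersD(1)[OF assms(1)] by simp
  then obtain i where i: "i < Suc m" "ys ! i = Suc m"
    using avoidersD(3)[OF assms(1)] by (auto simp: in_set_conv_nth)
  have "i = 0 \<or> i = m"
    using nth_avoiders_eq_max[OF assms(1) i] by simp
  moreover have "ys ! 0 \<noteq> ys ! m"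
    using avoidersD[OF assms(1)] assms(2) by (simp add: nth_eq_iff_index_eq)
  ultimately show ?thesis
    using i by auto
qed

lemma card_avoiders_1_rec:
  assumes "m \<ge> 1"
  shows "card (avoiders 1 (Suc (Suc m))) = card (avoiders 1 (Suc m)) + card (avoiders 1 m)"
proof -
  have "{ys \<in> avoiders 1 (Suc m). \<not> (1 \<le> Suc m \<and> ys ! (Suc m - 1) = Suc m)}
      = {ys \<in> avoiders 1 (Suc m). ys ! 0 = Suc m}"
    using starts_with_max_iff_not_ends_with_max[OF _ assms] by auto
  then show ?thesis
    using card_avoiders_Suc[of 1 "Suc m"] card_avoiders_starting_with_max[of 1 m] by simp
qed

lemma card_avoiders_double:
  assumes "k \<ge> 2" "m \<ge> 1" "m \<noteq> k"
  shows "card (avoiders k (Suc m)) = 2 * card (avoiders k m)"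
proof -
  have "ys ! (m - k) \<noteq> m" if "ys \<in> avoiders k m" "k \<le> m" for ys
  proof
    assume "ys ! (m - k) = m"
    moreover have "m - k < m"
      using assms that(2) by simp
    ultimately have "m - k = 0 \<or> m - k = m - 1"
      using nth_avoiders_eq_max[OF that(1)] by blast
    then show False
      using assms that(2) by auto
  qed
  then have "{ys \<in> avoiders k m. \<not> (k \<le> m \<and> ys ! (m - k) = m)} = avoiders k m"
    by auto
  then show ?thesis
    using card_avoiders_Suc[of k m] assms by simp
qed

lemma card_avoiders_first_beyond_k:
  "card (avoiders (Suc j) (Suc (Suc j))) + card (avoiders (Suc j) j)
    = 2 * card (avoiders (Suc j) (Suc j))"
proof -
  let ?A = "avoiders (Suc j) (Suc j)"
  let ?S = "{ys \<in> ?A. ys ! 0 = Suc j}"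
  have "{ys \<in> ?A. \<not> (Suc j \<le> Suc j \<and> ys ! (Suc j - Suc j) = Suc j)} = ?A - ?S"
    by auto
  moreover have "card ?S = card (avoiders (Suc j) j)"
    by (rule card_avoiders_starting_with_max) simp
  moreover have "card ?S \<le> card ?A"
    by (rule card_mono) (auto simp: finite_avoiders)
  ultimately show ?thesis
    using card_avoiders_Suc[of "Suc j" "Suc j"] by (simp add: card_Diff_subset finite_avoiders)
qed

lemma card_avoiders_1: "n \<ge> 1 \<Longrightarrow> card (avoiders 1 n) = fib n"
proof (induction n rule: fib.induct)
  case (3 n)
  show ?case
  proof (cases n)
    case 0
    have "{ys \<in> avoiders 1 1. \<not> (1 \<le> (1::nat) \<and> ys ! 0 = 1)} = {}"
      using avoiders_1[of 1] by simp
    then show ?thesis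
      using card_avoiders_Suc[of 1 1] avoiders_1[of 1] 0 by simp
  next
    case (Suc m)
    then show ?thesis
      using card_avoiders_1_rec[of "Suc m"] 3 by simp
  qed
qed (use avoiders_1[of 1] in simp_all)

lemma card_avoiders_le_k:
  assumes "k \<ge> 2" "1 \<le> n" "n \<le> k"
  shows "card (avoiders k n) = 2 ^ (n - 1)"
  using assms(2,3)
proof (induction n rule: dec_induct)
  case base
  then show ?case
    using avoiders_1[of k] by simp
next
  case (step m)
  then show ?case
    using card_avoiders_double[of k m] assms(1) by (simp add: power_eq_if)
qed

lemma card_avoiders_gt_k:
  assumes "k \<ge> 2" "n \<ge> k + 1"
  shows "card (avoiders k n) = 3 * 2 ^ (n - 3)"
  using assms(2)
proof (induction n rule: dec_induct)
  case base
  obtain j where j: "k = Suc (Suc j)"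
    using assms(1) by (metis add_2_eq_Suc le_Suc_ex)
  have "card (avoiders k (k + 1)) + 2 ^ j = 2 * 2 ^ Suc j"
    using card_avoiders_first_beyond_k[of "Suc j"] card_avoiders_le_k[OF assms(1)] j by simp
  then show ?case
    using j by simp
next
  case (step m)
  then have "Suc m - 3 = Suc (m - 3)"
    using assms(1) by simp
  then show ?case
    using step card_avoiders_double[of k m] assms(1) by simp
qed

theorem mainTheorem2:
  fixes n k :: nat
  assumes "n \<ge> 1" and "k \<ge> 1"
  shows "a_nk n k = (if k = 1 then fib n
                     else if n \<le> k then 2 ^ (n - 1)
                     else 3 * 2 ^ (n - 3))"
  using assms card_avoiders_1 card_avoiders_le_k[of k n] card_avoiders_gt_k[of k n]
  by (simp add: a_nk_eq_card_avoiders)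

end
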